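(* For an almost contact metric manifold $\mathcal M$ with structure $(\phi,\xi,\eta,g)$ the following are equivalent: (1) $\mathcal M$ is a CR-manifold and $h=0$; (2) $\mathcal M$ is $\eta$-normal and $h=0$; (3) $\mathcal M$ is normal, i.e. $N^{(1)}=0$ identically.
   Context: Almost contact metric structure $(\phi,\xi,\eta,g)$: $\phi^2=-\mathrm{Id}+\eta\otimes\xi$, $\eta(\xi)=1$, $g(\phi X,\phi Y)=g(X,Y)-\eta(X)\eta(Y)$. Convention $2d\eta(X,Y)=X\eta(Y)-Y\eta(X)-\eta([X,Y])$. $[\phi,\phi](X,Y)=\phi^2[X,Y]+[\phi X,\phi Y]-\phi[\phi X,Y]-\phi[X,\phi Y]$, $N^{(1)}=[\phi,\phi]+2d\eta\otimes\xi$; $h=\tfrac12\mathcal L_\xi\phi$. $\eta$-normal: $N^{(1)}(X,Y)=0$ whenever $\eta(X)=\eta(Y)=0$. CR-manifold: for all $X,Y$ with $\eta(X)=\eta(Y)=0$ there is $Z$ with $\eta(Z)=0$ and $[X-i\phi X,Y-i\phi Y]=Z-i\phi Z$. *)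

theory Defs
  imports Complex_Main "HOL-Library.Function_Algebras"
begin

text \<open>
  Algebraic model of a smooth manifold M (points of type 'm):
  F is the algebra of smooth real functions on M (a set of functions 'm => real),
  smooth vector fields are the derivations of F (acting on functions), the Lie bracket
  is the commutator, and tensor fields are F-linear maps.
\<close>

type_synonym 'm vfield = "('m \<Rightarrow> real) \<Rightarrow> ('m \<Rightarrow> real)"

definition fun_algebra :: "('m \<Rightarrow> real) set \<Rightarrow> bool" where
  "fun_algebra F \<longleftrightarrow>
     (\<forall>c. (\<lambda>_. c) \<in> F) \<and>
     (\<forall>f\<in>F. \<forall>g\<in>F. f + g \<in> F \<and> f * g \<in> F \<and> - f \<in> F)"

definition vfields :: "('m \<Rightarrow> real) set \<Rightarrow> 'm vfield set" where
  "vfields F = {X.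
     (\<forall>f\<in>F. X f \<in> F) \<and>
     (\<forall>c. X (\<lambda>_. c) = 0) \<and>
     (\<forall>f\<in>F. \<forall>g\<in>F. X (f + g) = X f + X g \<and> X (f * g) = X f * g + f * X g) \<and>
     (\<forall>h. h \<notin> F \<longrightarrow> X h = 0)}"

definition smv :: "('m \<Rightarrow> real) \<Rightarrow> 'm vfield \<Rightarrow> 'm vfield" where
  "smv f X = (\<lambda>h. f * X h)"

definition lie :: "'m vfield \<Rightarrow> 'm vfield \<Rightarrow> 'm vfield" where
  "lie X Y = (\<lambda>h. X (Y h) - Y (X h))"

definition tensor11 :: "('m \<Rightarrow> real) set \<Rightarrow> ('m vfield \<Rightarrow> 'm vfield) \<Rightarrow> bool" where
  "tensor11 F \<phi> \<longleftrightarrow>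
     (\<forall>X\<in>vfields F. \<phi> X \<in> vfields F) \<and>
     (\<forall>X\<in>vfields F. \<forall>Y\<in>vfields F. \<phi> (X + Y) = \<phi> X + \<phi> Y) \<and>
     (\<forall>f\<in>F. \<forall>X\<in>vfields F. \<phi> (smv f X) = smv f (\<phi> X))"

definition one_form :: "('m \<Rightarrow> real) set \<Rightarrow> ('m vfield \<Rightarrow> ('m \<Rightarrow> real)) \<Rightarrow> bool" where
  "one_form F \<eta> \<longleftrightarrow>
     (\<forall>X\<in>vfields F. \<eta> X \<in> F) \<and>
     (\<forall>X\<in>vfields F. \<forall>Y\<in>vfields F. \<eta> (X + Y) = \<eta> X + \<eta> Y) \<and>
     (\<forall>f\<in>F. \<forall>X\<in>vfields F. \<eta> (smv f X) = f * \<eta> X)"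

definition riem_metric :: "('m \<Rightarrow> real) set \<Rightarrow> ('m vfield \<Rightarrow> 'm vfield \<Rightarrow> ('m \<Rightarrow> real)) \<Rightarrow> bool" where
  "riem_metric F g \<longleftrightarrow>
     (\<forall>X\<in>vfields F. \<forall>Y\<in>vfields F. g X Y \<in> F \<and> g X Y = g Y X) \<and>
     (\<forall>X\<in>vfields F. \<forall>Y\<in>vfields F. \<forall>Z\<in>vfields F. g (X + Y) Z = g X Z + g Y Z) \<and>
     (\<forall>f\<in>F. \<forall>X\<in>vfields F. \<forall>Y\<in>vfields F. g (smv f X) Y = f * g X Y) \<and>
     (\<forall>X\<in>vfields F. (\<forall>p. g X X p \<ge> 0) \<and> (g X X = 0 \<longrightarrow> X = 0))"

definition almost_contact_metric ::
  "('m \<Rightarrow> real) set \<Rightarrow> ('m vfield \<Rightarrow> 'm vfield) \<Rightarrow> 'm vfield \<Rightarrow>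
   ('m vfield \<Rightarrow> ('m \<Rightarrow> real)) \<Rightarrow> ('m vfield \<Rightarrow> 'm vfield \<Rightarrow> ('m \<Rightarrow> real)) \<Rightarrow> bool" where
  "almost_contact_metric F \<phi> \<xi> \<eta> g \<longleftrightarrow>
     fun_algebra F \<and> tensor11 F \<phi> \<and> \<xi> \<in> vfields F \<and> one_form F \<eta> \<and> riem_metric F g \<and>
     (\<forall>X\<in>vfields F. \<phi> (\<phi> X) = - X + smv (\<eta> X) \<xi>) \<and>
     \<eta> \<xi> = 1 \<and>
     (\<forall>X\<in>vfields F. \<forall>Y\<in>vfields F. g (\<phi> X) (\<phi> Y) = g X Y - \<eta> X * \<eta> Y)"

definition two_d_eta :: "('m vfield \<Rightarrow> ('m \<Rightarrow> real)) \<Rightarrow> 'm vfield \<Rightarrow> 'm vfield \<Rightarrow> ('m \<Rightarrow> real)" where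
  "two_d_eta \<eta> X Y = X (\<eta> Y) - Y (\<eta> X) - \<eta> (lie X Y)"

definition nijenhuis :: "('m vfield \<Rightarrow> 'm vfield) \<Rightarrow> 'm vfield \<Rightarrow> 'm vfield \<Rightarrow> 'm vfield" where
  "nijenhuis \<phi> X Y = \<phi> (\<phi> (lie X Y)) + lie (\<phi> X) (\<phi> Y) - \<phi> (lie (\<phi> X) Y) - \<phi> (lie X (\<phi> Y))"

definition N1 :: "('m vfield \<Rightarrow> 'm vfield) \<Rightarrow> 'm vfield \<Rightarrow> ('m vfield \<Rightarrow> ('m \<Rightarrow> real)) \<Rightarrow>
    'm vfield \<Rightarrow> 'm vfield \<Rightarrow> 'm vfield" where
  "N1 \<phi> \<xi> \<eta> X Y = nijenhuis \<phi> X Y + smv (two_d_eta \<eta> X Y) \<xi>"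

text \<open>h = 1/2 L_\<xi> \<phi>, with (L_\<xi> \<phi>) X = [\<xi>, \<phi> X] - \<phi> [\<xi>, X].\<close>
definition h_op :: "('m vfield \<Rightarrow> 'm vfield) \<Rightarrow> 'm vfield \<Rightarrow> 'm vfield \<Rightarrow> 'm vfield" where
  "h_op \<phi> \<xi> X = smv (\<lambda>_. 1/2) (lie \<xi> (\<phi> X) - \<phi> (lie \<xi> X))"

definition h_zero :: "('m \<Rightarrow> real) set \<Rightarrow> ('m vfield \<Rightarrow> 'm vfield) \<Rightarrow> 'm vfield \<Rightarrow> bool" where
  "h_zero F \<phi> \<xi> \<longleftrightarrow> (\<forall>X\<in>vfields F. h_op \<phi> \<xi> X = 0)"

definition eta_normal :: "('m \<Rightarrow> real) set \<Rightarrow> ('m vfield \<Rightarrow> 'm vfield) \<Rightarrow> 'm vfield \<Rightarrow>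
    ('m vfield \<Rightarrow> ('m \<Rightarrow> real)) \<Rightarrow> bool" where
  "eta_normal F \<phi> \<xi> \<eta> \<longleftrightarrow>
     (\<forall>X\<in>vfields F. \<forall>Y\<in>vfields F. \<eta> X = 0 \<longrightarrow> \<eta> Y = 0 \<longrightarrow> N1 \<phi> \<xi> \<eta> X Y = 0)"

definition normal :: "('m \<Rightarrow> real) set \<Rightarrow> ('m vfield \<Rightarrow> 'm vfield) \<Rightarrow> 'm vfield \<Rightarrow>
    ('m vfield \<Rightarrow> ('m \<Rightarrow> real)) \<Rightarrow> bool" where
  "normal F \<phi> \<xi> \<eta> \<longleftrightarrow> (\<forall>X\<in>vfields F. \<forall>Y\<in>vfields F. N1 \<phi> \<xi> \<eta> X Y = 0)"

text \<open>Complex vector fields A + iB represented as pairs (A, B); the Lie bracket is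
  extended complex-bilinearly.\<close>
definition clie :: "'m vfield \<times> 'm vfield \<Rightarrow> 'm vfield \<times> 'm vfield \<Rightarrow> 'm vfield \<times> 'm vfield" where
  "clie P Q = (lie (fst P) (fst Q) - lie (snd P) (snd Q), lie (fst P) (snd Q) + lie (snd P) (fst Q))"

definition cr_vec :: "('m vfield \<Rightarrow> 'm vfield) \<Rightarrow> 'm vfield \<Rightarrow> 'm vfield \<times> 'm vfield" where
  "cr_vec \<phi> X = (X, - \<phi> X)"

definition CR_manifold :: "('m \<Rightarrow> real) set \<Rightarrow> ('m vfield \<Rightarrow> 'm vfield) \<Rightarrow>
    ('m vfield \<Rightarrow> ('m \<Rightarrow> real)) \<Rightarrow> bool" where
  "CR_manifold F \<phi> \<eta> \<longleftrightarrow>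
     (\<forall>X\<in>vfields F. \<forall>Y\<in>vfields F. \<eta> X = 0 \<longrightarrow> \<eta> Y = 0 \<longrightarrow>
        (\<exists>Z\<in>vfields F. \<eta> Z = 0 \<and> clie (cr_vec \<phi> X) (cr_vec \<phi> Y) = cr_vec \<phi> Z))"

end

theory Submission
  imports Defs
begin

text \<open>
  For horizontal \<open>X, Y\<close> (\<open>\<eta> X = \<eta> Y = 0\<close>) write
  \<open>[X - i\<phi>X, Y - i\<phi>Y] = A - i B\<close>; then \<open>N\<^sup>1(X,Y) = -A - \<phi>B\<close>. Hence the bracket has the form
  \<open>Z - i\<phi>Z\<close> iff \<open>A = -\<phi>B\<close> and \<open>\<eta> B = 0\<close>, and the second condition follows from
  \<open>N\<^sup>1(X,\<phi>Y) = 0\<close>; so CR and \<open>\<eta>\<close>-normal coincide. As \<open>N\<^sup>1\<close> is skew and tensorial and every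
  field is horizontal up to a multiple of \<open>\<xi>\<close>, normality means \<open>\<eta>\<close>-normality plus
  \<open>N\<^sup>1(\<xi>,\<cdot>) = 0\<close>, and the latter says exactly \<open>[\<xi>,\<phi>X] = \<phi>[\<xi>,X]\<close>, i.e. \<open>h = 0\<close>.
\<close>

lemma smv_add_right: "smv f (X + Y) = smv f X + smv f Y"
  by (simp add: smv_def fun_eq_iff algebra_simps)
lemma smv_diff_right: "smv f (X - Y) = smv f X - smv f Y"
  by (simp add: smv_def fun_eq_iff algebra_simps)
lemma smv_zero_right [simp]: "smv f 0 = 0"
  by (simp add: smv_def fun_eq_iff)
lemma smv_add_left: "smv (f + h) X = smv f X + smv h X"
  by (simp add: smv_def fun_eq_iff algebra_simps)
lemma smv_uminus_left: "smv (- f) X = - smv f X"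
  by (simp add: smv_def fun_eq_iff)
lemma smv_zero_left [simp]: "smv 0 X = 0"
  by (simp add: smv_def fun_eq_iff)
lemma smv_one [simp]: "smv 1 X = X"
  by (simp add: smv_def fun_eq_iff)
lemma smv_smv: "smv f (smv h X) = smv (f * h) X"
  by (simp add: smv_def fun_eq_iff)
lemma smv_apply [simp]: "smv f X h = f * X h"
  by (simp add: smv_def)

lemmas smv_simps = smv_add_right smv_diff_right smv_add_left smv_uminus_left smv_smv

lemma lie_antisym: "lie X Y = - lie Y X"
  by (simp add: lie_def fun_eq_iff)

lemma lie_self [simp]: "lie X X = 0"
  by (simp add: lie_def fun_eq_iff)

text \<open>
  From here on sums and products of functions stay unexpanded: the derivation rules
  only match \<open>X (f + g)\<close>, not \<open>X (\<lambda>p. f p + g p)\<close>.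
\<close>
declare plus_fun_apply [simp del] times_fun_apply [simp del] minus_apply [simp del]
  uminus_apply [simp del] zero_fun_apply [simp del] one_fun_apply [simp del]

lemmas fun_apply_simps = plus_fun_apply times_fun_apply minus_apply uminus_apply
  zero_fun_apply one_fun_apply

lemma plus_vfield_apply [simp]: "((X :: 'm vfield) + Y) h = X h + Y h"
  by (simp add: fun_apply_simps)
lemma minus_vfield_apply [simp]: "((X :: 'm vfield) - Y) h = X h - Y h"
  by (simp add: fun_apply_simps)
lemma uminus_vfield_apply [simp]: "(- (X :: 'm vfield)) h = - X h"
  by (simp add: fun_apply_simps)
lemma zero_vfield_apply [simp]: "(0 :: 'm vfield) h = 0"
  by (simp add: fun_apply_simps)

locale derivations =
  fixes F :: "('m \<Rightarrow> real) set"
  assumes fun_algebra: "fun_algebra F"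
begin

lemma F_const [simp]: "(\<lambda>_. c) \<in> F"
  using fun_algebra by (simp add: fun_algebra_def)
lemma F_zero [simp]: "0 \<in> F"
  using F_const[of 0] by (simp only: zero_fun_def)
lemma F_add [simp]: "f \<in> F \<Longrightarrow> h \<in> F \<Longrightarrow> f + h \<in> F"
  using fun_algebra by (simp add: fun_algebra_def)
lemma F_mult [simp]: "f \<in> F \<Longrightarrow> h \<in> F \<Longrightarrow> f * h \<in> F"
  using fun_algebra by (simp add: fun_algebra_def)
lemma F_uminus [simp]: "f \<in> F \<Longrightarrow> - f \<in> F"
  using fun_algebra unfolding fun_algebra_def by blast
lemma F_diff [simp]: "f \<in> F \<Longrightarrow> h \<in> F \<Longrightarrow> f - h \<in> F"
  by (metis F_add F_uminus diff_conv_add_uminus)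

lemma vfield_closed [simp]: "X \<in> vfields F \<Longrightarrow> f \<in> F \<Longrightarrow> X f \<in> F"
  unfolding vfields_def by blast
lemma vfield_outside: "X \<in> vfields F \<Longrightarrow> h \<notin> F \<Longrightarrow> X h = 0"
  unfolding vfields_def by blast
lemma vfield_const [simp]: "X \<in> vfields F \<Longrightarrow> X (\<lambda>_. c) = 0"
  unfolding vfields_def by blast
lemma vfield_zero [simp]: "X \<in> vfields F \<Longrightarrow> X 0 = 0"
  using vfield_const[of X 0] by (simp only: zero_fun_def)
lemma vfield_one [simp]: "X \<in> vfields F \<Longrightarrow> X 1 = 0"
  using vfield_const[of X 1] by (simp only: one_fun_def)
lemma vfield_add [simp]: "X \<in> vfields F \<Longrightarrow> f \<in> F \<Longrightarrow> h \<in> F \<Longrightarrow> X (f + h) = X f + X h"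
  unfolding vfields_def by blast
lemma vfield_mult [simp]:
  "X \<in> vfields F \<Longrightarrow> f \<in> F \<Longrightarrow> h \<in> F \<Longrightarrow> X (f * h) = X f * h + f * X h"
  unfolding vfields_def by blast

lemma vfield_uminus [simp]:
  assumes "X \<in> vfields F" "f \<in> F"
  shows "X (- f) = - X f"
proof -
  have "X f + X (- f) = X (f + - f)" using vfield_add[OF assms F_uminus[OF assms(2)]] ..
  also have "\<dots> = 0" using assms(1) by simp
  finally show ?thesis by (simp add: add_eq_0_iff)
qed


lemma vfieldsI:
  assumes "\<And>f. f \<in> F \<Longrightarrow> Z f \<in> F" "\<And>c. Z (\<lambda>_. c) = 0"
    and "\<And>f h. f \<in> F \<Longrightarrow> h \<in> F \<Longrightarrow> Z (f + h) = Z f + Z h"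
    and "\<And>f h. f \<in> F \<Longrightarrow> h \<in> F \<Longrightarrow> Z (f * h) = Z f * h + f * Z h"
    and "\<And>h. h \<notin> F \<Longrightarrow> Z h = 0"
  shows "Z \<in> vfields F"
  using assms unfolding vfields_def by blast

lemma vfields_zero [simp]: "0 \<in> vfields F"
  unfolding vfields_def by (simp add: fun_apply_simps)
lemma vfields_add [simp]: "X \<in> vfields F \<Longrightarrow> Y \<in> vfields F \<Longrightarrow> X + Y \<in> vfields F"
  by (rule vfieldsI) (simp_all add: vfield_outside fun_eq_iff fun_apply_simps algebra_simps)
lemma vfields_uminus [simp]: "X \<in> vfields F \<Longrightarrow> - X \<in> vfields F"
  by (rule vfieldsI) (simp_all add: vfield_outside fun_eq_iff fun_apply_simps algebra_simps)
lemma vfields_diff [simp]: "X \<in> vfields F \<Longrightarrow> Y \<in> vfields F \<Longrightarrow> X - Y \<in> vfields F"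
  by (metis vfields_add vfields_uminus diff_conv_add_uminus)
lemma vfields_smv [simp]: "f \<in> F \<Longrightarrow> X \<in> vfields F \<Longrightarrow> smv f X \<in> vfields F"
  by (rule vfieldsI) (simp_all add: vfield_outside fun_eq_iff fun_apply_simps algebra_simps)
lemma vfields_lie [simp]: "X \<in> vfields F \<Longrightarrow> Y \<in> vfields F \<Longrightarrow> lie X Y \<in> vfields F"
  by (rule vfieldsI) (simp_all add: lie_def vfield_outside algebra_simps)

text \<open>Variants for arguments \<open>X h\<close> that need not lie in \<open>F\<close>: for \<open>h \<notin> F\<close> both sides vanish.\<close>
lemma vfield_add_values:
  "X \<in> vfields F \<Longrightarrow> Y \<in> vfields F \<Longrightarrow> Z \<in> vfields F \<Longrightarrow> Z (X h + Y h) = Z (X h) + Z (Y h)"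
  by (cases "h \<in> F") (simp_all add: vfield_outside)
lemma vfield_uminus_values: "X \<in> vfields F \<Longrightarrow> Z \<in> vfields F \<Longrightarrow> Z (- X h) = - Z (X h)"
  by (cases "h \<in> F") (simp_all add: vfield_outside)
lemma vfield_mult_values:
  "X \<in> vfields F \<Longrightarrow> Z \<in> vfields F \<Longrightarrow> f \<in> F \<Longrightarrow> Z (f * X h) = Z f * X h + f * Z (X h)"
  by (cases "h \<in> F") (simp_all add: vfield_outside)

lemma lie_add_left:
  "X \<in> vfields F \<Longrightarrow> Y \<in> vfields F \<Longrightarrow> Z \<in> vfields F \<Longrightarrow> lie (X + Y) Z = lie X Z + lie Y Z"
  by (rule ext) (simp add: lie_def vfield_add_values algebra_simps)
lemma lie_add_right:
  "X \<in> vfields F \<Longrightarrow> Y \<in> vfields F \<Longrightarrow> Z \<in> vfields F \<Longrightarrow> lie Z (X + Y) = lie Z X + lie Z Y"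
  by (rule ext) (simp add: lie_def vfield_add_values algebra_simps)
lemma lie_uminus_left: "X \<in> vfields F \<Longrightarrow> Z \<in> vfields F \<Longrightarrow> lie (- X) Z = - lie X Z"
  by (rule ext) (simp add: lie_def vfield_uminus_values algebra_simps)
lemma lie_uminus_right: "X \<in> vfields F \<Longrightarrow> Z \<in> vfields F \<Longrightarrow> lie Z (- X) = - lie Z X"
  by (rule ext) (simp add: lie_def vfield_uminus_values algebra_simps)
lemma lie_diff_right:
  "X \<in> vfields F \<Longrightarrow> Y \<in> vfields F \<Longrightarrow> Z \<in> vfields F \<Longrightarrow> lie Z (X - Y) = lie Z X - lie Z Y"
  by (metis diff_conv_add_uminus lie_add_right lie_uminus_right vfields_uminus)
lemma lie_zero_left [simp]: "Z \<in> vfields F \<Longrightarrow> lie 0 Z = 0"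
  by (rule ext) (simp add: lie_def)
lemma lie_smv_left: "f \<in> F \<Longrightarrow> X \<in> vfields F \<Longrightarrow> Y \<in> vfields F \<Longrightarrow>
    lie (smv f X) Y = smv f (lie X Y) - smv (Y f) X"
  by (rule ext) (simp add: lie_def vfield_mult_values algebra_simps)
lemma lie_smv_right: "f \<in> F \<Longrightarrow> X \<in> vfields F \<Longrightarrow> Y \<in> vfields F \<Longrightarrow>
    lie Y (smv f X) = smv f (lie Y X) + smv (Y f) X"
  by (rule ext) (simp add: lie_def vfield_mult_values algebra_simps)

lemmas lie_simps = lie_add_left lie_add_right lie_uminus_left lie_uminus_right
  lie_diff_right lie_smv_left lie_smv_right

end

locale almost_contact = derivations F for F :: "('m \<Rightarrow> real) set" +
  fixes \<phi> :: "'m vfield \<Rightarrow> 'm vfield" and \<xi> :: "'m vfield" and \<eta> :: "'m vfield \<Rightarrow> ('m \<Rightarrow> real)"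
  assumes phi_tensor: "tensor11 F \<phi>"
    and xi_vfield [simp]: "\<xi> \<in> vfields F"
    and eta_one_form: "one_form F \<eta>"
    and phi_phi: "X \<in> vfields F \<Longrightarrow> \<phi> (\<phi> X) = - X + smv (\<eta> X) \<xi>"
    and eta_xi [simp]: "\<eta> \<xi> = 1"

lemma almost_contact_metric_imp_almost_contact:
  "almost_contact_metric F \<phi> \<xi> \<eta> g \<Longrightarrow> almost_contact F \<phi> \<xi> \<eta>"
  by (simp add: almost_contact_metric_def almost_contact_def derivations_def almost_contact_axioms_def)

context almost_contact
begin

lemma phi_vfield [simp]: "X \<in> vfields F \<Longrightarrow> \<phi> X \<in> vfields F"
  using phi_tensor by (simp add: tensor11_def)
lemma phi_add: "X \<in> vfields F \<Longrightarrow> Y \<in> vfields F \<Longrightarrow> \<phi> (X + Y) = \<phi> X + \<phi> Y"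
  using phi_tensor by (simp add: tensor11_def)
lemma phi_smv: "f \<in> F \<Longrightarrow> X \<in> vfields F \<Longrightarrow> \<phi> (smv f X) = smv f (\<phi> X)"
  using phi_tensor by (simp add: tensor11_def)
lemma phi_zero [simp]: "\<phi> 0 = 0"
  using phi_add[of 0 0] by simp
lemma phi_uminus: "X \<in> vfields F \<Longrightarrow> \<phi> (- X) = - \<phi> X"
  using phi_add[of X "- X"] by (simp add: eq_neg_iff_add_eq_0 add.commute)
lemma phi_diff: "X \<in> vfields F \<Longrightarrow> Y \<in> vfields F \<Longrightarrow> \<phi> (X - Y) = \<phi> X - \<phi> Y"
  by (metis diff_conv_add_uminus phi_add phi_uminus vfields_uminus)

lemma eta_in_F [simp]: "X \<in> vfields F \<Longrightarrow> \<eta> X \<in> F"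
  using eta_one_form by (simp add: one_form_def)
lemma eta_add: "X \<in> vfields F \<Longrightarrow> Y \<in> vfields F \<Longrightarrow> \<eta> (X + Y) = \<eta> X + \<eta> Y"
  using eta_one_form by (simp add: one_form_def)
lemma eta_smv: "f \<in> F \<Longrightarrow> X \<in> vfields F \<Longrightarrow> \<eta> (smv f X) = f * \<eta> X"
  using eta_one_form by (simp add: one_form_def)
lemma eta_zero [simp]: "\<eta> 0 = 0"
  using eta_add[of 0 0] by simp
lemma eta_uminus: "X \<in> vfields F \<Longrightarrow> \<eta> (- X) = - \<eta> X"
  using eta_add[of X "- X"] by (simp add: eq_neg_iff_add_eq_0 add.commute)
lemma eta_diff: "X \<in> vfields F \<Longrightarrow> Y \<in> vfields F \<Longrightarrow> \<eta> (X - Y) = \<eta> X - \<eta> Y"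
  by (metis diff_conv_add_uminus eta_add eta_uminus vfields_uminus)

lemmas linear_simps = phi_add phi_smv phi_uminus phi_diff eta_add eta_smv eta_uminus eta_diff

lemma smv_xi_eq_0_iff: "f \<in> F \<Longrightarrow> smv f \<xi> = 0 \<longleftrightarrow> f = 0"
  using eta_smv[of f \<xi>] by auto

lemma phi_xi [simp]: "\<phi> \<xi> = 0"
proof -
  define a where "a = \<eta> (\<phi> \<xi>)"
  have a: "a \<in> F" by (simp add: a_def)
  have phi2_xi: "\<phi> (\<phi> \<xi>) = 0" by (simp add: phi_phi)
  then have "0 = - \<phi> \<xi> + smv a \<xi>"
    using phi_phi[of "\<phi> \<xi>"] by (simp add: a_def)
  then have phi_xi: "\<phi> \<xi> = smv a \<xi>" by (simp add: eq_neg_iff_add_eq_0 add.commute)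
  have "smv (a * a) \<xi> = \<phi> (\<phi> \<xi>)"
    using a by (simp add: phi_xi phi_smv smv_smv)
  then have "a * a = 0" using a phi2_xi smv_xi_eq_0_iff by simp
  then have "a = 0" by (simp add: fun_eq_iff fun_apply_simps)
  then show ?thesis by (simp add: phi_xi)
qed

lemma eta_phi [simp]:
  assumes X: "X \<in> vfields F"
  shows "\<eta> (\<phi> X) = 0"
proof -
  have "\<phi> (\<phi> (\<phi> X)) = - \<phi> X + smv (\<eta> (\<phi> X)) \<xi>" using X by (intro phi_phi) simp
  moreover have "\<phi> (\<phi> (\<phi> X)) = - \<phi> X" using X by (simp add: phi_phi[OF X] linear_simps)
  ultimately show ?thesis using X smv_xi_eq_0_iff by simp
qed

lemma two_d_eta_add_left: "X \<in> vfields F \<Longrightarrow> Y \<in> vfields F \<Longrightarrow> Z \<in> vfields F \<Longrightarrow>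
    two_d_eta \<eta> (X + Y) Z = two_d_eta \<eta> X Z + two_d_eta \<eta> Y Z"
  by (simp add: two_d_eta_def lie_simps linear_simps algebra_simps)
lemma two_d_eta_antisym: "X \<in> vfields F \<Longrightarrow> Y \<in> vfields F \<Longrightarrow>
    two_d_eta \<eta> X Y = - two_d_eta \<eta> Y X"
  by (simp add: two_d_eta_def lie_antisym[of Y X] linear_simps)
lemma two_d_eta_smv_left: "f \<in> F \<Longrightarrow> X \<in> vfields F \<Longrightarrow> Y \<in> vfields F \<Longrightarrow>
    two_d_eta \<eta> (smv f X) Y = f * two_d_eta \<eta> X Y"
  by (simp add: two_d_eta_def lie_simps linear_simps algebra_simps)

lemma nijenhuis_add_left: "X \<in> vfields F \<Longrightarrow> Y \<in> vfields F \<Longrightarrow> Z \<in> vfields F \<Longrightarrow>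
    nijenhuis \<phi> (X + Y) Z = nijenhuis \<phi> X Z + nijenhuis \<phi> Y Z"
  by (simp add: nijenhuis_def lie_simps linear_simps algebra_simps)
lemma nijenhuis_antisym: "X \<in> vfields F \<Longrightarrow> Y \<in> vfields F \<Longrightarrow>
    nijenhuis \<phi> X Y = - nijenhuis \<phi> Y X"
  by (simp add: nijenhuis_def lie_antisym[of Y X] lie_antisym[of "\<phi> Y" "\<phi> X"]
      lie_antisym[of "\<phi> Y" X] lie_antisym[of Y "\<phi> X"] linear_simps algebra_simps)
lemma nijenhuis_smv_left: "f \<in> F \<Longrightarrow> X \<in> vfields F \<Longrightarrow> Y \<in> vfields F \<Longrightarrow>
    nijenhuis \<phi> (smv f X) Y = smv f (nijenhuis \<phi> X Y)"
  by (simp add: nijenhuis_def lie_simps linear_simps smv_simps algebra_simps)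

lemma N1_add_left: "X \<in> vfields F \<Longrightarrow> Y \<in> vfields F \<Longrightarrow> Z \<in> vfields F \<Longrightarrow>
    N1 \<phi> \<xi> \<eta> (X + Y) Z = N1 \<phi> \<xi> \<eta> X Z + N1 \<phi> \<xi> \<eta> Y Z"
  by (simp add: N1_def two_d_eta_add_left nijenhuis_add_left smv_add_left algebra_simps)
lemma N1_antisym: "X \<in> vfields F \<Longrightarrow> Y \<in> vfields F \<Longrightarrow> N1 \<phi> \<xi> \<eta> X Y = - N1 \<phi> \<xi> \<eta> Y X"
  by (simp add: N1_def nijenhuis_antisym[of X Y] two_d_eta_antisym[of X Y] smv_uminus_left)
lemma N1_smv_left: "f \<in> F \<Longrightarrow> X \<in> vfields F \<Longrightarrow> Y \<in> vfields F \<Longrightarrow>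
    N1 \<phi> \<xi> \<eta> (smv f X) Y = smv f (N1 \<phi> \<xi> \<eta> X Y)"
  by (simp add: N1_def two_d_eta_smv_left nijenhuis_smv_left smv_add_right smv_smv)

lemma N1_xi_left: "X \<in> vfields F \<Longrightarrow>
    N1 \<phi> \<xi> \<eta> \<xi> X = \<phi> (\<phi> (lie \<xi> X)) - \<phi> (lie \<xi> (\<phi> X)) + smv (\<xi> (\<eta> X) - \<eta> (lie \<xi> X)) \<xi>"
  by (simp add: N1_def nijenhuis_def two_d_eta_def)

lemma N1_horizontal: "X \<in> vfields F \<Longrightarrow> Y \<in> vfields F \<Longrightarrow> \<eta> X = 0 \<Longrightarrow> \<eta> Y = 0 \<Longrightarrow>
    N1 \<phi> \<xi> \<eta> X Y = - (lie X Y - lie (\<phi> X) (\<phi> Y)) - \<phi> (lie (\<phi> X) Y + lie X (\<phi> Y))"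
  by (simp add: N1_def nijenhuis_def two_d_eta_def phi_phi linear_simps smv_simps algebra_simps)

lemma clie_cr_vec: "X \<in> vfields F \<Longrightarrow> Y \<in> vfields F \<Longrightarrow>
    clie (cr_vec \<phi> X) (cr_vec \<phi> Y) = (lie X Y - lie (\<phi> X) (\<phi> Y), - (lie (\<phi> X) Y + lie X (\<phi> Y)))"
  by (simp add: clie_def cr_vec_def lie_simps algebra_simps)

lemma h_zero_iff: "h_zero F \<phi> \<xi> \<longleftrightarrow> (\<forall>X\<in>vfields F. lie \<xi> (\<phi> X) = \<phi> (lie \<xi> X))"
  by (simp add: h_zero_def h_op_def smv_def fun_eq_iff fun_apply_simps)

lemma N1_xi_left_eq_0_iff_h_zero: "(\<forall>X\<in>vfields F. N1 \<phi> \<xi> \<eta> \<xi> X = 0) \<longleftrightarrow> h_zero F \<phi> \<xi>"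
proof
  assume N: "\<forall>X\<in>vfields F. N1 \<phi> \<xi> \<eta> \<xi> X = 0"
  show "h_zero F \<phi> \<xi>" unfolding h_zero_iff
  proof
    fix X assume X: "X \<in> vfields F"
    define L where "L = lie \<xi> X"
    define M where "M = lie \<xi> (\<phi> X)"
    have L: "L \<in> vfields F" and M: "M \<in> vfields F" using X by (simp_all add: L_def M_def)
    have "\<eta> (N1 \<phi> \<xi> \<eta> \<xi> (\<phi> X)) = 0" using N X by simp
    then have eta_M: "\<eta> M = 0" using X by (simp add: N1_xi_left linear_simps M_def)
    have "\<phi> (N1 \<phi> \<xi> \<eta> \<xi> X) = 0" using N X by simp
    then have "\<phi> (\<phi> (\<phi> L)) - \<phi> (\<phi> M) = 0"
      using X L M by (simp add: N1_xi_left linear_simps L_def[symmetric] M_def[symmetric])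
    then have "- \<phi> L + M = 0" using L M eta_M by (simp add: phi_phi linear_simps)
    then show "M = \<phi> L" by (simp add: add_eq_0_iff)
  qed
next
  assume "h_zero F \<phi> \<xi>"
  then have h: "\<And>Y. Y \<in> vfields F \<Longrightarrow> lie \<xi> (\<phi> Y) = \<phi> (lie \<xi> Y)" by (simp add: h_zero_iff)
  show "\<forall>X\<in>vfields F. N1 \<phi> \<xi> \<eta> \<xi> X = 0"
  proof
    fix X assume X: "X \<in> vfields F"
    define L where "L = lie \<xi> X"
    have L: "L \<in> vfields F" using X by (simp add: L_def)
    text \<open>Commuting \<open>\<L>\<^sub>\<xi>\<close> past \<open>\<phi>\<^sup>2 = -1 + \<eta> \<otimes> \<xi>\<close> shows that \<open>\<L>\<^sub>\<xi> \<eta> = 0\<close> on \<open>X\<close>.\<close>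
    have "lie \<xi> (\<phi> (\<phi> X)) = \<phi> (\<phi> L)" using h X by (simp add: L_def)
    then have "- L + smv (\<xi> (\<eta> X)) \<xi> = - L + smv (\<eta> L) \<xi>"
      using X L by (simp add: phi_phi lie_simps L_def)
    then have "\<eta> (smv (\<xi> (\<eta> X)) \<xi>) = \<eta> (smv (\<eta> L) \<xi>)" by simp
    then have "\<xi> (\<eta> X) = \<eta> L" using X L by (simp add: eta_smv)
    then show "N1 \<phi> \<xi> \<eta> \<xi> X = 0" using h X by (simp add: N1_xi_left L_def)
  qed
qed

lemma N1_eq_N1_horizontal_left:
  assumes N_xi: "\<forall>Y\<in>vfields F. N1 \<phi> \<xi> \<eta> \<xi> Y = 0"
    and X: "X \<in> vfields F" and Y: "Y \<in> vfields F"
  shows "N1 \<phi> \<xi> \<eta> X Y = N1 \<phi> \<xi> \<eta> (X - smv (\<eta> X) \<xi>) Y"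
proof -
  have "N1 \<phi> \<xi> \<eta> X Y = N1 \<phi> \<xi> \<eta> ((X - smv (\<eta> X) \<xi>) + smv (\<eta> X) \<xi>) Y" by simp
  also have "\<dots> = N1 \<phi> \<xi> \<eta> (X - smv (\<eta> X) \<xi>) Y + smv (\<eta> X) (N1 \<phi> \<xi> \<eta> \<xi> Y)"
    using X Y N1_add_left[of "X - smv (\<eta> X) \<xi>" "smv (\<eta> X) \<xi>" Y] N1_smv_left[of "\<eta> X" \<xi> Y]
    by simp
  finally show ?thesis using N_xi Y by simp
qed

lemma normal_iff_eta_normal_and_N1_xi_left:
  "normal F \<phi> \<xi> \<eta> \<longleftrightarrow> eta_normal F \<phi> \<xi> \<eta> \<and> (\<forall>X\<in>vfields F. N1 \<phi> \<xi> \<eta> \<xi> X = 0)"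
proof (intro iffI conjI)
  assume "eta_normal F \<phi> \<xi> \<eta> \<and> (\<forall>X\<in>vfields F. N1 \<phi> \<xi> \<eta> \<xi> X = 0)"
  then have eta_normal: "eta_normal F \<phi> \<xi> \<eta>" and N_xi: "\<forall>X\<in>vfields F. N1 \<phi> \<xi> \<eta> \<xi> X = 0"
    by blast+
  show "normal F \<phi> \<xi> \<eta>" unfolding normal_def
  proof (intro ballI)
    fix X Y assume X: "X \<in> vfields F" and Y: "Y \<in> vfields F"
    define X\<^sub>0 where "X\<^sub>0 = X - smv (\<eta> X) \<xi>"
    define Y\<^sub>0 where "Y\<^sub>0 = Y - smv (\<eta> Y) \<xi>"
    have X\<^sub>0: "X\<^sub>0 \<in> vfields F" "\<eta> X\<^sub>0 = 0" using X by (simp_all add: X\<^sub>0_def linear_simps)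
    have Y\<^sub>0: "Y\<^sub>0 \<in> vfields F" "\<eta> Y\<^sub>0 = 0" using Y by (simp_all add: Y\<^sub>0_def linear_simps)
    have "N1 \<phi> \<xi> \<eta> X Y = N1 \<phi> \<xi> \<eta> X\<^sub>0 Y"
      unfolding X\<^sub>0_def using N_xi X Y by (rule N1_eq_N1_horizontal_left)
    also have "\<dots> = - N1 \<phi> \<xi> \<eta> Y X\<^sub>0" using X\<^sub>0 Y by (simp add: N1_antisym[of X\<^sub>0 Y])
    also have "\<dots> = - N1 \<phi> \<xi> \<eta> Y\<^sub>0 X\<^sub>0"
      unfolding Y\<^sub>0_def using N1_eq_N1_horizontal_left[OF N_xi Y X\<^sub>0(1)] by simp
    also have "\<dots> = N1 \<phi> \<xi> \<eta> X\<^sub>0 Y\<^sub>0" using X\<^sub>0 Y\<^sub>0 by (simp add: N1_antisym[of Y\<^sub>0 X\<^sub>0])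
    also have "\<dots> = 0" using eta_normal X\<^sub>0 Y\<^sub>0 by (simp add: eta_normal_def)
    finally show "N1 \<phi> \<xi> \<eta> X Y = 0" .
  qed
qed (simp_all add: normal_def eta_normal_def)

lemma CR_manifold_imp_eta_normal:
  assumes CR: "CR_manifold F \<phi> \<eta>"
  shows "eta_normal F \<phi> \<xi> \<eta>"
  unfolding eta_normal_def
proof (intro ballI impI)
  fix X Y assume X: "X \<in> vfields F" and Y: "Y \<in> vfields F" and eta_X: "\<eta> X = 0" and eta_Y: "\<eta> Y = 0"
  obtain Z where Z: "Z \<in> vfields F" "\<eta> Z = 0"
    and "clie (cr_vec \<phi> X) (cr_vec \<phi> Y) = cr_vec \<phi> Z"
    using CR X Y eta_X eta_Y unfolding CR_manifold_def by blast
  then have "(lie X Y - lie (\<phi> X) (\<phi> Y), - (lie (\<phi> X) Y + lie X (\<phi> Y))) = (Z, - \<phi> Z)"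
    by (metis clie_cr_vec[OF X Y] cr_vec_def)
  then have "lie X Y - lie (\<phi> X) (\<phi> Y) = Z" "lie (\<phi> X) Y + lie X (\<phi> Y) = \<phi> Z"
    by (simp_all only: prod.inject neg_equal_iff_equal)
  then show "N1 \<phi> \<xi> \<eta> X Y = 0" using X Y eta_X eta_Y Z by (simp add: N1_horizontal phi_phi)
qed

lemma eta_normal_imp_CR_manifold:
  assumes eta_normal: "eta_normal F \<phi> \<xi> \<eta>"
  shows "CR_manifold F \<phi> \<eta>"
  unfolding CR_manifold_def
proof (intro ballI impI)
  fix X Y assume X: "X \<in> vfields F" and Y: "Y \<in> vfields F" and eta_X: "\<eta> X = 0" and eta_Y: "\<eta> Y = 0"
  define A where "A = lie X Y - lie (\<phi> X) (\<phi> Y)"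
  define B where "B = lie (\<phi> X) Y + lie X (\<phi> Y)"
  have B: "B \<in> vfields F" using X Y by (simp add: B_def)
  have "N1 \<phi> \<xi> \<eta> X Y = 0" using eta_normal X Y eta_X eta_Y by (simp add: eta_normal_def)
  then have A_eq: "A = - \<phi> B" using X Y eta_X eta_Y
    by (simp add: N1_horizontal A_def B_def diff_eq_eq flip: minus_add_distrib)
  have "N1 \<phi> \<xi> \<eta> X (\<phi> Y) = 0" using eta_normal X Y eta_X by (simp add: eta_normal_def)
  then have "- B - \<phi> (lie (\<phi> X) (\<phi> Y) + lie X (\<phi> (\<phi> Y))) = 0"
    using X Y eta_X eta_Y by (simp add: N1_horizontal phi_phi B_def lie_simps algebra_simps)
  then have "\<eta> (- B - \<phi> (lie (\<phi> X) (\<phi> Y) + lie X (\<phi> (\<phi> Y)))) = 0" by simp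
  then have eta_B: "\<eta> B = 0" using X Y B by (simp add: linear_simps)
  have "clie (cr_vec \<phi> X) (cr_vec \<phi> Y) = (A, - B)"
    using X Y by (simp add: clie_cr_vec A_def B_def)
  also have "\<dots> = cr_vec \<phi> A"
    using B eta_B by (simp add: cr_vec_def A_eq phi_phi linear_simps)
  finally have "clie (cr_vec \<phi> X) (cr_vec \<phi> Y) = cr_vec \<phi> A" .
  moreover have "A \<in> vfields F" "\<eta> A = 0" using B by (simp_all add: A_eq linear_simps)
  ultimately show "\<exists>Z\<in>vfields F. \<eta> Z = 0 \<and> clie (cr_vec \<phi> X) (cr_vec \<phi> Y) = cr_vec \<phi> Z"
    by blast
qed

end

theorem mainTheorem3:
  fixes F :: "('m \<Rightarrow> real) set"
    and \<phi> :: "'m vfield \<Rightarrow> 'm vfield" and \<xi> :: "'m vfield"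
    and \<eta> :: "'m vfield \<Rightarrow> ('m \<Rightarrow> real)" and g :: "'m vfield \<Rightarrow> 'm vfield \<Rightarrow> ('m \<Rightarrow> real)"
  assumes "almost_contact_metric F \<phi> \<xi> \<eta> g"
  shows "((CR_manifold F \<phi> \<eta> \<and> h_zero F \<phi> \<xi>) \<longleftrightarrow> (eta_normal F \<phi> \<xi> \<eta> \<and> h_zero F \<phi> \<xi>))
       \<and> ((eta_normal F \<phi> \<xi> \<eta> \<and> h_zero F \<phi> \<xi>) \<longleftrightarrow> normal F \<phi> \<xi> \<eta>)"
proof -
  interpret almost_contact F \<phi> \<xi> \<eta>
    using assms by (rule almost_contact_metric_imp_almost_contact)
  show ?thesis
    using CR_manifold_imp_eta_normal eta_normal_imp_CR_manifold
      normal_iff_eta_normal_and_N1_xi_left N1_xi_left_eq_0_iff_h_zero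
    by blast
qed

end
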